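(* Fix a conditioning input $o$; all expectations below are conditional on $o$. Let $P_{\mathcal W}$ be an orthogonal projection on $\mathbb{R}^d$, $P_{\mathcal C}=I-P_{\mathcal W}$, and $d_{\mathcal W}=\operatorname{tr}(P_{\mathcal W})$. Let $A_1$ and $\mu$ be random vectors in $\mathbb{R}^d$ with finite second moments, let $\sigma>0$, and let $\Xi\sim\mathcal{N}(0,I_d)$ be independent of $(A_1,\mu)$ (conditionally on $o$). Define the WarmPrior source $$A_0=P_{\mathcal W}(\mu+\sigma\Xi)+P_{\mathcal C}\Xi,$$ and $A_t=(1-t)A_0+tA_1$ for $t\in[0,1]$. Define the warm-coordinate branching cost $$\mathcal{B}_{\mathcal W}(o)=\int_0^1\frac{1}{(1-t)^2}\,\mathbb{E}\Big[\big\|P_{\mathcal W}A_1-\mathbb{E}[P_{\mathcal W}A_1\mid A_t,o]\big\|_2^2\,\Big|\,o\Big]\,dt.$$ Then $$\mathcal{B}_{\mathcal W}(o)\le \mathbb{E}\big[\|P_{\mathcal W}(A_1-\mu)\|_2^2\,\big|\,o\big]+\sigma^2 d_{\mathcal W}.$$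
   Context: Action chunks are vectorized into $\mathbb{R}^d$; $o$ is the observation on which everything is conditioned. $P_{\mathcal W}$ projects onto the "warm" coordinates (where the prior is centered at the anchor mean $\mu$ with residual noise scale $\sigma$), and $P_{\mathcal C}$ onto the remaining "cold" coordinates (where the prior is standard Gaussian). $\|\cdot\|_2$ is the Euclidean norm. *)

theory Defs
  imports "HOL-Probability.Probability"
begin

definition orth_proj :: "real^'n^'n \<Rightarrow> bool" where
  "orth_proj P \<longleftrightarrow> P ** P = P \<and> transpose P = P"

definition warm_source ::
  "real^'n^'n \<Rightarrow> real \<Rightarrow> ('a \<Rightarrow> real^'n) \<Rightarrow> ('a \<Rightarrow> real^'n) \<Rightarrow> 'a \<Rightarrow> real^'n" where
  "warm_source P \<sigma> \<mu> \<Xi> \<omega> = P *v (\<mu> \<omega> + \<sigma> *\<^sub>R \<Xi> \<omega>) + (mat 1 - P) *v \<Xi> \<omega>"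

definition interp :: "('a \<Rightarrow> real^'n) \<Rightarrow> ('a \<Rightarrow> real^'n) \<Rightarrow> real \<Rightarrow> 'a \<Rightarrow> real^'n" where
  "interp A0 A1 t \<omega> = (1 - t) *\<^sub>R A0 \<omega> + t *\<^sub>R A1 \<omega>"

definition cond_exp_vec ::
  "'a measure \<Rightarrow> ('a \<Rightarrow> 'b::topological_space) \<Rightarrow> ('a \<Rightarrow> real^'n) \<Rightarrow> 'a \<Rightarrow> real^'n" where
  "cond_exp_vec M Y X \<omega> =
     (\<chi> i. real_cond_exp M (vimage_algebra (space M) Y borel) (\<lambda>\<eta>. X \<eta> $ i) \<omega>)"

definition branching_cost_W ::
  "'a measure \<Rightarrow> real^'n^'n \<Rightarrow> ('a \<Rightarrow> real^'n) \<Rightarrow> ('a \<Rightarrow> real^'n) \<Rightarrow> ennreal" where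
  "branching_cost_W M P A0 A1 =
     (\<integral>\<^sup>+ t. indicator {0..1} t *
        ennreal (1 / (1 - t)^2) *
        (\<integral>\<^sup>+ \<omega>. ennreal ((norm (P *v A1 \<omega> - cond_exp_vec M (interp A0 A1 t) (\<lambda>\<eta>. P *v A1 \<eta>) \<omega>))^2) \<partial>M)
      \<partial>lborel)"

end

theory Submission
  imports Defs
begin

(* Since P_W A_t is a function of A_t, the least-squares property of conditional expectation bounds
   the integrand at time t by (1 - t)^-2 E ||P_W A_1 - P_W A_t||^2 = E ||P_W A_1 - P_W A_0||^2.
   As P_W annihilates P_C, this residual is P_W (A_1 - mu) - sigma P_W Xi, a sum of two independent
   terms of which the Gaussian one is centred; hence its second moment is
   E ||P_W (A_1 - mu)||^2 + sigma^2 E ||P_W Xi||^2 = E ||P_W (A_1 - mu)||^2 + sigma^2 tr P_W.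
   This bound does not depend on t, and [0,1] has length one. *)

section \<open>Square-integrable random variables\<close>

definition square_integrable :: "'a measure \<Rightarrow> ('a \<Rightarrow> 'b::real_normed_vector) \<Rightarrow> bool" where
  "square_integrable M f \<longleftrightarrow> f \<in> borel_measurable M \<and> integrable M (\<lambda>x. (norm (f x))^2)"

lemma borel_measurable_vec_iff:
  fixes f :: "'a \<Rightarrow> real^'n"
  shows "f \<in> borel_measurable M \<longleftrightarrow> (\<forall>i. (\<lambda>x. f x $ i) \<in> borel_measurable M)"
  unfolding borel_measurable_euclidean_space[of f] by (auto simp: Basis_vec_def inner_axis)

lemma square_integrable_real_iff:
  "square_integrable M (f :: 'a \<Rightarrow> real) \<longleftrightarrow> f \<in> borel_measurable M \<and> integrable M (\<lambda>x. (f x)^2)"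
  by (simp add: square_integrable_def)

lemma square_integrable_bounded_linear:
  fixes L :: "'b::{real_normed_vector, second_countable_topology} \<Rightarrow> 'c::{real_normed_vector, second_countable_topology}"
  assumes L: "bounded_linear L" and f: "square_integrable M f"
  shows "square_integrable M (\<lambda>x. L (f x))"
proof -
  obtain K where K: "\<And>v. norm (L v) \<le> norm v * K" using bounded_linear.pos_bounded[OF L] by blast
  have "L \<in> borel_measurable borel"
    by (intro borel_measurable_continuous_onI linear_continuous_on L)
  then have meas: "(\<lambda>x. L (f x)) \<in> borel_measurable M"
    using f measurable_compose unfolding square_integrable_def by blast
  have "integrable M (\<lambda>x. (norm (L (f x)))^2)"
  proof (rule Bochner_Integration.integrable_bound)
    show "integrable M (\<lambda>x. K^2 * (norm (f x))^2)"
      using f by (simp add: square_integrable_def)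
    have "(norm (L (f x)))^2 \<le> (norm (f x) * K)^2" for x
      using K by (intro power_mono) auto
    then show "AE x in M. norm ((norm (L (f x)))^2) \<le> norm (K^2 * (norm (f x))^2)"
      by (intro AE_I2) (simp add: power_mult_distrib mult.commute)
  qed (use meas in measurable)
  with meas show ?thesis by (simp add: square_integrable_def)
qed

lemma square_integrable_add:
  fixes f g :: "'a \<Rightarrow> 'b::{real_normed_vector, second_countable_topology}"
  assumes f: "square_integrable M f" and g: "square_integrable M g"
  shows "square_integrable M (\<lambda>x. f x + g x)"
proof -
  have [measurable]: "f \<in> borel_measurable M" "g \<in> borel_measurable M"
    using f g by (simp_all add: square_integrable_def)
  have "integrable M (\<lambda>x. (norm (f x + g x))^2)"
  proof (rule Bochner_Integration.integrable_bound)
    show "integrable M (\<lambda>x. 2 * (norm (f x))^2 + 2 * (norm (g x))^2)"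
      using f g by (simp add: square_integrable_def)
    have "(norm (f x + g x))^2 \<le> 2 * (norm (f x))^2 + 2 * (norm (g x))^2" for x
    proof -
      have "(norm (f x + g x))^2 \<le> (norm (f x) + norm (g x))^2"
        by (simp add: norm_triangle_ineq power_mono)
      also have "\<dots> \<le> 2 * (norm (f x))^2 + 2 * (norm (g x))^2"
        using sum_squares_bound[of "norm (f x)" "norm (g x)"] by (simp add: power2_sum)
      finally show ?thesis .
    qed
    then show "AE x in M. norm ((norm (f x + g x))^2) \<le> norm (2 * (norm (f x))^2 + 2 * (norm (g x))^2)"
      by (intro AE_I2) simp
  qed measurable
  then show ?thesis by (simp add: square_integrable_def)
qed

lemma square_integrable_scaleR:
  "square_integrable M f \<Longrightarrow> square_integrable M (\<lambda>x. c *\<^sub>R f x)"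
  for f :: "'a \<Rightarrow> 'b::{real_normed_vector, second_countable_topology}"
  by (rule square_integrable_bounded_linear[OF bounded_linear_scaleR_right])

lemma square_integrable_diff:
  fixes f g :: "'a \<Rightarrow> 'b::{real_normed_vector, second_countable_topology}"
  assumes "square_integrable M f" and "square_integrable M g"
  shows "square_integrable M (\<lambda>x. f x - g x)"
  using square_integrable_add[OF assms(1) square_integrable_scaleR[OF assms(2), of "-1"]] by simp

lemma integrable_mult_of_square_integrable:
  fixes f g :: "'a \<Rightarrow> real"
  assumes f: "square_integrable M f" and g: "square_integrable M g"
  shows "integrable M (\<lambda>x. f x * g x)"
proof (rule Bochner_Integration.integrable_bound)
  have [measurable]: "f \<in> borel_measurable M" "g \<in> borel_measurable M"
    using f g by (simp_all add: square_integrable_def)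
  show "integrable M (\<lambda>x. (f x)^2 + (g x)^2)"
    using f g by (simp add: square_integrable_real_iff)
  show "(\<lambda>x. f x * g x) \<in> borel_measurable M" by measurable
  have "\<bar>f x\<bar> * \<bar>g x\<bar> \<le> (f x)^2 + (g x)^2" for x
  proof -
    have "2 * (\<bar>f x\<bar> * \<bar>g x\<bar>) \<le> (f x)^2 + (g x)^2"
      using sum_squares_bound[of "\<bar>f x\<bar>" "\<bar>g x\<bar>"] by (simp add: mult.assoc)
    moreover have "0 \<le> \<bar>f x\<bar> * \<bar>g x\<bar>" by simp
    ultimately show ?thesis by linarith
  qed
  then show "AE x in M. norm (f x * g x) \<le> norm ((f x)^2 + (g x)^2)"
    by (intro AE_I2) (simp add: abs_mult)
qed

lemma (in finite_measure) integrable_of_square_integrable: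
  "square_integrable M f \<Longrightarrow> integrable M f" for f :: "'a \<Rightarrow> real"
  by (rule square_integrable_imp_integrable) (simp_all add: square_integrable_real_iff)

lemma power2_norm_vec: "(norm v)^2 = (\<Sum>i\<in>UNIV. (v $ i)^2)"
  for v :: "real^'n"
  by (simp add: norm_vec_def L2_set_def sum_nonneg)

lemma square_integrable_vec_iff:
  fixes f :: "'a \<Rightarrow> real^'n"
  shows "square_integrable M f \<longleftrightarrow> (\<forall>i. square_integrable M (\<lambda>x. f x $ i))"
proof
  assume "square_integrable M f"
  then show "\<forall>i. square_integrable M (\<lambda>x. f x $ i)"
    using square_integrable_bounded_linear[OF bounded_linear_vec_nth] by blast
next
  assume "\<forall>i. square_integrable M (\<lambda>x. f x $ i)"
  then show "square_integrable M f"
    by (auto simp: square_integrable_def power2_norm_vec borel_measurable_vec_iff)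
qed

lemma nn_integral_norm_sq_eq_integral:
  "square_integrable M f \<Longrightarrow>
     (\<integral>\<^sup>+x. ennreal ((norm (f x))^2) \<partial>M) = ennreal (\<integral>x. (norm (f x))^2 \<partial>M)"
  unfolding square_integrable_def by (intro nn_integral_eq_integral) auto

section \<open>Conditional expectation as least-squares predictor\<close>

lemma (in finite_measure_subalgebra) square_integrable_real_cond_exp:
  assumes X: "square_integrable M X"
  shows "square_integrable M (real_cond_exp M F X)"
  unfolding square_integrable_real_iff
proof
  have [measurable]: "X \<in> borel_measurable M" and X2: "integrable M (\<lambda>x. (X x)^2)"
    using X by (simp_all add: square_integrable_real_iff)
  have jensen: "AE x in M. (real_cond_exp M F X x)^2 \<le> real_cond_exp M F (\<lambda>x. (X x)^2) x"
    using real_cond_exp_jensens_inequality(2)[where I=UNIV and q=power2, OF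
        square_integrable_imp_integrable _ _ X2 convex_power2] X2
    by auto
  show "integrable M (\<lambda>x. (real_cond_exp M F X x)^2)"
    by (rule Bochner_Integration.integrable_bound[OF real_cond_exp_int(1)[OF X2]])
       (use jensen in \<open>auto elim!: AE_mp\<close>)
qed simp

lemma (in finite_measure_subalgebra) real_cond_exp_least_squares:
  assumes X: "square_integrable M X"
    and Y: "square_integrable M Y" and YF: "Y \<in> borel_measurable F"
  shows "(\<integral>x. (X x - real_cond_exp M F X x)^2 \<partial>M) \<le> (\<integral>x. (X x - Y x)^2 \<partial>M)"
proof -
  define C where "C = real_cond_exp M F X"
  define D where "D x = C x - Y x" for x
  have C: "square_integrable M C"
    unfolding C_def by (rule square_integrable_real_cond_exp[OF X])
  have D: "square_integrable M D"
    unfolding D_def[abs_def] by (rule square_integrable_diff[OF C Y])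
  have XC: "square_integrable M (\<lambda>x. X x - C x)" by (rule square_integrable_diff[OF X C])
  have [measurable]: "X \<in> borel_measurable M" using X by (simp add: square_integrable_def)
  have "D \<in> borel_measurable F" unfolding D_def[abs_def] C_def using YF by measurable
  then have orth: "(\<integral>x. D x * C x \<partial>M) = (\<integral>x. D x * X x \<partial>M)"
    unfolding C_def by (rule real_cond_exp_intg(2)[OF integrable_mult_of_square_integrable[OF D X]]) simp
  have "(\<lambda>x. (X x - Y x)^2) = (\<lambda>x. (X x - C x)^2 + (D x)^2 + 2 * (D x * X x - D x * C x))"
    by (auto simp: D_def power2_eq_square algebra_simps)
  then have "(\<integral>x. (X x - Y x)^2 \<partial>M) = (\<integral>x. (X x - C x)^2 \<partial>M) + (\<integral>x. (D x)^2 \<partial>M)"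
    using XC D orth integrable_mult_of_square_integrable[OF D X] integrable_mult_of_square_integrable[OF D C]
    by (simp add: square_integrable_real_iff)
  moreover have "0 \<le> (\<integral>x. (D x)^2 \<partial>M)" by simp
  ultimately show ?thesis unfolding C_def by linarith
qed

lemma subalgebra_vimage_algebra:
  "Z \<in> measurable M N \<Longrightarrow> subalgebra M (vimage_algebra (space M) Z N)"
  unfolding subalgebra_def using sets_image_in_sets[OF refl] by simp

lemma cond_exp_vec_least_squares:
  fixes X Y :: "'a \<Rightarrow> real^'n" and Z :: "'a \<Rightarrow> 'b::topological_space"
  assumes "finite_measure M" and Z: "Z \<in> borel_measurable M"
    and X: "square_integrable M X"
    and Y: "square_integrable M Y" and YZ: "Y \<in> borel_measurable (vimage_algebra (space M) Z borel)"
  shows "(\<integral>\<^sup>+x. ennreal ((norm (X x - cond_exp_vec M Z X x))^2) \<partial>M)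
           \<le> (\<integral>\<^sup>+x. ennreal ((norm (X x - Y x))^2) \<partial>M)"
proof -
  define F where "F = vimage_algebra (space M) Z borel"
  interpret finite_measure_subalgebra M F
    using assms(1) subalgebra_vimage_algebra[OF Z]
    by (simp add: finite_measure_subalgebra_def finite_measure_subalgebra_axioms_def F_def)
  have Xi: "square_integrable M (\<lambda>x. X x $ i)" for i
    using X by (simp add: square_integrable_vec_iff)
  have Yi: "square_integrable M (\<lambda>x. Y x $ i)" and YiF: "(\<lambda>x. Y x $ i) \<in> borel_measurable F" for i
    using Y YZ by (simp_all add: square_integrable_vec_iff borel_measurable_vec_iff F_def)
  have XEi: "square_integrable M (\<lambda>x. X x $ i - real_cond_exp M F (\<lambda>y. X y $ i) x)" for i
    by (rule square_integrable_diff[OF Xi square_integrable_real_cond_exp[OF Xi]])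
  then have XE: "square_integrable M (\<lambda>x. X x - cond_exp_vec M Z X x)"
    by (simp add: square_integrable_vec_iff cond_exp_vec_def F_def)
  have "(\<integral>x. (norm (X x - cond_exp_vec M Z X x))^2 \<partial>M)
      = (\<Sum>i\<in>UNIV. \<integral>x. (X x $ i - real_cond_exp M F (\<lambda>y. X y $ i) x)^2 \<partial>M)"
    using XEi unfolding power2_norm_vec
    by (simp add: cond_exp_vec_def F_def square_integrable_real_iff Bochner_Integration.integral_sum)
  also have "\<dots> \<le> (\<Sum>i\<in>UNIV. \<integral>x. (X x $ i - Y x $ i)^2 \<partial>M)"
    by (intro sum_mono real_cond_exp_least_squares Xi Yi YiF)
  also have "\<dots> = (\<integral>x. (norm (X x - Y x))^2 \<partial>M)"
    using square_integrable_diff[OF Xi Yi] unfolding power2_norm_vec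
    by (simp add: square_integrable_real_iff Bochner_Integration.integral_sum)
  finally show ?thesis
    using nn_integral_norm_sq_eq_integral[OF XE] nn_integral_norm_sq_eq_integral[OF square_integrable_diff[OF X Y]]
    by (simp add: ennreal_leI)
qed

section \<open>Standard Gaussian vectors\<close>

lemma (in prob_space) std_normal_vec_moments:
  fixes \<Xi> :: "'a \<Rightarrow> real^'n"
  assumes D: "\<And>i. distributed M lborel (\<lambda>\<omega>. \<Xi> \<omega> $ i) std_normal_density"
    and indep: "indep_vars (\<lambda>_. borel) (\<lambda>i \<omega>. \<Xi> \<omega> $ i) UNIV"
  shows "square_integrable M \<Xi>"
    and "expectation (\<lambda>\<omega>. \<Xi> \<omega> $ i) = 0"
    and "expectation (\<lambda>\<omega>. \<Xi> \<omega> $ i * \<Xi> \<omega> $ j) = (if i = j then 1 else 0)"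
proof -
  have [measurable]: "(\<lambda>\<omega>. \<Xi> \<omega> $ i) \<in> borel_measurable M" for i
    using distributed_measurable[OF D] by simp
  have sq: "integrable M (\<lambda>\<omega>. (\<Xi> \<omega> $ i)^2)" for i
    using distributed_integrable[OF D, of "\<lambda>x. x^2"] integrable_std_normal_moment[of 2] by simp
  then show "square_integrable M \<Xi>"
    by (simp add: square_integrable_vec_iff square_integrable_real_iff)
  have int: "integrable M (\<lambda>\<omega>. \<Xi> \<omega> $ i)" for i
    by (rule square_integrable_imp_integrable[OF _ sq]) simp
  have mean: "expectation (\<lambda>\<omega>. \<Xi> \<omega> $ i) = 0" for i
    by (rule standard_normal_distributed_expectation[OF D])
  then show "expectation (\<lambda>\<omega>. \<Xi> \<omega> $ i) = 0" .
  show "expectation (\<lambda>\<omega>. \<Xi> \<omega> $ i * \<Xi> \<omega> $ j) = (if i = j then 1 else 0)"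
  proof (cases "i = j")
    case True
    then show ?thesis
      using distributed_integral[OF D, of "\<lambda>x. x^2"] integral_std_normal_moment_even[of 1]
      by (simp add: power2_eq_square)
  next
    case False
    have "expectation (\<lambda>\<omega>. \<Prod>l\<in>{i, j}. \<Xi> \<omega> $ l) = (\<Prod>l\<in>{i, j}. expectation (\<lambda>\<omega>. \<Xi> \<omega> $ l))"
      by (intro indep_vars_lebesgue_integral indep_vars_subset[OF indep] int) auto
    then show ?thesis using mean False by simp
  qed
qed

lemma (in prob_space) expectation_norm_sq_matrix_std_normal:
  fixes \<Xi> :: "'a \<Rightarrow> real^'n" and A :: "real^'n^'m"
  assumes D: "\<And>i. distributed M lborel (\<lambda>\<omega>. \<Xi> \<omega> $ i) std_normal_density"
    and indep: "indep_vars (\<lambda>_. borel) (\<lambda>i \<omega>. \<Xi> \<omega> $ i) UNIV"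
  shows "expectation (\<lambda>\<omega>. (norm (A *v \<Xi> \<omega>))^2) = (\<Sum>i\<in>UNIV. \<Sum>j\<in>UNIV. (A $ i $ j)^2)"
proof -
  note moments = std_normal_vec_moments[OF D indep]
  have prod_int: "integrable M (\<lambda>\<omega>. \<Xi> \<omega> $ j * \<Xi> \<omega> $ k)" for j k
    using moments(1) by (intro integrable_mult_of_square_integrable) (auto simp: square_integrable_vec_iff)
  have "(norm (A *v v))^2 = (\<Sum>i\<in>UNIV. \<Sum>j\<in>UNIV. \<Sum>k\<in>UNIV. A $ i $ j * A $ i $ k * (v $ j * v $ k))" for v
    unfolding power2_norm_vec
    by (simp add: matrix_vector_mult_def power2_eq_square sum_product algebra_simps)
  then have "expectation (\<lambda>\<omega>. (norm (A *v \<Xi> \<omega>))^2)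
      = (\<Sum>i\<in>UNIV. \<Sum>j\<in>UNIV. \<Sum>k\<in>UNIV. A $ i $ j * A $ i $ k * expectation (\<lambda>\<omega>. \<Xi> \<omega> $ j * \<Xi> \<omega> $ k))"
    by (simp add: prod_int Bochner_Integration.integrable_sum)
  also have "\<dots> = (\<Sum>i\<in>UNIV. \<Sum>j\<in>UNIV. (A $ i $ j)^2)"
    by (simp add: moments(3) power2_eq_square if_distrib[of "\<lambda>x. _ * x"] cong: if_cong)
  finally show ?thesis .
qed

section \<open>Independence\<close>

lemma Int_stable_preimages: "Int_stable {Z -` A \<inter> \<Omega> | A. A \<in> sets K}"
proof (safe intro!: Int_stableI)
  fix A B assume "A \<in> sets K" "B \<in> sets K"
  then show "\<exists>C. (Z -` A \<inter> \<Omega>) \<inter> (Z -` B \<inter> \<Omega>) = Z -` C \<inter> \<Omega> \<and> C \<in> sets K"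
    by (intro exI[of _ "A \<inter> B"]) auto
qed

lemma preimages_compose_subset:
  assumes Z: "Z \<in> measurable M K" and f: "f \<in> measurable K N"
  shows "{(\<lambda>\<omega>. f (Z \<omega>)) -` A \<inter> space M | A. A \<in> sets N} \<subseteq> {Z -` A \<inter> space M | A. A \<in> sets K}"
proof safe
  fix A assume "A \<in> sets N"
  then have "f -` A \<inter> space K \<in> sets K" using f by (rule measurable_sets[rotated])
  moreover have "(\<lambda>\<omega>. f (Z \<omega>)) -` A \<inter> space M = Z -` (f -` A \<inter> space K) \<inter> space M"
    using measurable_space[OF Z] by auto
  ultimately show "\<exists>B. (\<lambda>\<omega>. f (Z \<omega>)) -` A \<inter> space M = Z -` B \<inter> space M \<and> B \<in> sets K"
    by blast
qed

text \<open>\<open>indep_var\<close> requires both variables to take values in the same space,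
  so the maps into a common space \<open>N\<close> are applied before independence is derived.\<close>

lemma (in prob_space) indep_var_compose_of_indep_set_preimages:
  assumes X: "X \<in> measurable M S" and Y: "Y \<in> measurable M T"
    and g: "g \<in> measurable S N" and h: "h \<in> measurable T N"
    and indep: "indep_set {X -` A \<inter> space M | A. A \<in> sets S} {Y -` A \<inter> space M | A. A \<in> sets T}"
  shows "indep_var N (\<lambda>\<omega>. g (X \<omega>)) N (\<lambda>\<omega>. h (Y \<omega>))"
proof -
  have "indep_set (sigma_sets (space M) {X -` A \<inter> space M | A. A \<in> sets S})
                  (sigma_sets (space M) {Y -` A \<inter> space M | A. A \<in> sets T})"
    by (rule indep_set_sigma_sets[OF indep Int_stable_preimages Int_stable_preimages])
  then have "indep_set (sigma_sets (space M) {(\<lambda>\<omega>. g (X \<omega>)) -` A \<inter> space M | A. A \<in> sets N})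
                       (sigma_sets (space M) {(\<lambda>\<omega>. h (Y \<omega>)) -` A \<inter> space M | A. A \<in> sets N})"
    unfolding indep_set_def
    by (rule indep_sets_mono_sets)
       (simp split: bool.split add: sigma_sets_mono' preimages_compose_subset X Y g h)
  with X Y g h show ?thesis
    unfolding indep_var_eq by (auto intro: measurable_compose)
qed

lemma (in prob_space) expectation_norm_sq_diff_indep:
  fixes W Z :: "'a \<Rightarrow> real^'n"
  assumes indep: "indep_var borel Z borel W"
    and W: "square_integrable M W" and Z: "square_integrable M Z"
    and mean_Z: "\<And>i. expectation (\<lambda>\<omega>. Z \<omega> $ i) = 0"
  shows "expectation (\<lambda>\<omega>. (norm (W \<omega> - Z \<omega>))^2)
           = expectation (\<lambda>\<omega>. (norm (W \<omega>))^2) + expectation (\<lambda>\<omega>. (norm (Z \<omega>))^2)"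
proof -
  have Wi: "square_integrable M (\<lambda>\<omega>. W \<omega> $ i)" and Zi: "square_integrable M (\<lambda>\<omega>. Z \<omega> $ i)" for i
    using W Z by (simp_all add: square_integrable_vec_iff)
  have cross: "expectation (\<lambda>\<omega>. Z \<omega> $ i * W \<omega> $ i) = 0" for i
  proof -
    have "indep_var borel (\<lambda>\<omega>. Z \<omega> $ i) borel (\<lambda>\<omega>. W \<omega> $ i)"
      using indep_var_compose[OF indep, of "\<lambda>v. v $ i" borel "\<lambda>v. v $ i" borel]
      by (simp add: comp_def)
    then show ?thesis
      using indep_var_lebesgue_integral[OF _ integrable_of_square_integrable[OF Zi]
          integrable_of_square_integrable[OF Wi]] mean_Z
      by simp
  qed
  have "(norm (w - z))^2 = (norm w)^2 + (norm z)^2 - 2 * (\<Sum>i\<in>UNIV. z $ i * w $ i)" for w z :: "real^'n"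
    using dot_norm_neg[of w z] by (simp add: inner_vec_def mult.commute)
  then show ?thesis
    using W Z integrable_mult_of_square_integrable[OF Zi Wi] cross
    by (simp add: square_integrable_def Bochner_Integration.integrable_sum)
qed

lemma borel_measurable_matrix_vector_mult [measurable (raw)]:
  "f \<in> borel_measurable M \<Longrightarrow> (\<lambda>x. A *v f x) \<in> borel_measurable M"
  for A :: "real^'n^'m"
  by (rule measurable_compose[OF _ borel_measurable_continuous_onI[OF linear_continuous_on]])
     (simp_all add: matrix_vector_mul_bounded_linear)

lemma square_integrable_matrix_vector_mult:
  "square_integrable M f \<Longrightarrow> square_integrable M (\<lambda>x. A *v f x)"
  for A :: "real^'n^'m"
  by (rule square_integrable_bounded_linear[OF matrix_vector_mul_bounded_linear])

lemma cond_exp_vec_proj_interp_le: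
  fixes A0 A1 :: "'a \<Rightarrow> real^'n" and P :: "real^'n^'m"
  assumes "finite_measure M"
    and A0: "square_integrable M A0" and A1: "square_integrable M A1"
  shows "(\<integral>\<^sup>+\<omega>. ennreal ((norm (P *v A1 \<omega> - cond_exp_vec M (interp A0 A1 t) (\<lambda>\<eta>. P *v A1 \<eta>) \<omega>))^2) \<partial>M)
           \<le> ennreal ((1 - t)^2) * (\<integral>\<^sup>+\<omega>. ennreal ((norm (P *v A1 \<omega> - P *v A0 \<omega>))^2) \<partial>M)"
proof -
  define Z where "Z = interp A0 A1 t"
  have Z: "square_integrable M Z"
    unfolding Z_def interp_def[abs_def]
    by (intro square_integrable_add square_integrable_scaleR A0 A1)
  have [measurable]: "Z \<in> borel_measurable M" "A0 \<in> borel_measurable M" "A1 \<in> borel_measurable M"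
    using Z A0 A1 by (simp_all add: square_integrable_def)
  have "(\<lambda>\<omega>. P *v Z \<omega>) \<in> borel_measurable (vimage_algebra (space M) Z borel)"
    by (intro borel_measurable_matrix_vector_mult measurable_vimage_algebra1) simp
  then have "(\<integral>\<^sup>+\<omega>. ennreal ((norm (P *v A1 \<omega> - cond_exp_vec M Z (\<lambda>\<eta>. P *v A1 \<eta>) \<omega>))^2) \<partial>M)
      \<le> (\<integral>\<^sup>+\<omega>. ennreal ((norm (P *v A1 \<omega> - P *v Z \<omega>))^2) \<partial>M)"
    by (intro cond_exp_vec_least_squares assms square_integrable_matrix_vector_mult Z) simp
  also have "P *v A1 \<omega> - P *v Z \<omega> = (1 - t) *\<^sub>R (P *v A1 \<omega> - P *v A0 \<omega>)" for \<omega>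
    by (simp add: Z_def interp_def matrix_vector_right_distrib matrix_vector_mult_scaleR algebra_simps)
  then have "(\<integral>\<^sup>+\<omega>. ennreal ((norm (P *v A1 \<omega> - P *v Z \<omega>))^2) \<partial>M)
      = (\<integral>\<^sup>+\<omega>. ennreal ((1 - t)^2) * ennreal ((norm (P *v A1 \<omega> - P *v A0 \<omega>))^2) \<partial>M)"
    by (simp add: power_mult_distrib ennreal_mult')
  also have "\<dots> = ennreal ((1 - t)^2) * (\<integral>\<^sup>+\<omega>. ennreal ((norm (P *v A1 \<omega> - P *v A0 \<omega>))^2) \<partial>M)"
    by (rule nn_integral_cmult) measurable
  finally show ?thesis unfolding Z_def .
qed

lemma proj_diff_warm_source:
  fixes P :: "real^'n^'n"
  assumes "P ** P = P"
  shows "P *v a - P *v warm_source P \<sigma> \<mu> \<Xi> \<omega> = P *v (a - \<mu> \<omega>) - \<sigma> *\<^sub>R (P *v \<Xi> \<omega>)"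
proof -
  have idem: "P *v (P *v v) = P *v v" for v by (simp add: matrix_vector_mul_assoc assms)
  then have "P *v ((mat 1 - P) *v v) = 0" for v
    by (simp add: matrix_vector_mult_diff_rdistrib matrix_vector_mult_diff_distrib)
  with idem show ?thesis
    by (simp add: warm_source_def matrix_vector_right_distrib matrix_vector_mult_scaleR
        matrix_vector_mult_diff_distrib algebra_simps)
qed

lemma sum_power2_entries_orth_proj:
  fixes P :: "real^'n^'n"
  assumes "orth_proj P"
  shows "(\<Sum>i\<in>UNIV. \<Sum>j\<in>UNIV. (P $ i $ j)^2) = trace P"
proof -
  have "P ** P = P" and sym: "P $ j $ i = P $ i $ j" for i j
    using assms by (auto simp: orth_proj_def vec_eq_iff transpose_def dest: arg_cong[of _ _ "\<lambda>A. A $ i $ j"])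
  then have "trace P = (\<Sum>i\<in>UNIV. (P ** P) $ i $ i)" by (simp add: trace_def)
  then show ?thesis by (simp add: matrix_matrix_mult_def sym power2_eq_square)
qed

lemma (in prob_space) warm_residual_second_moment:
  fixes A1 \<mu> \<Xi> :: "'a \<Rightarrow> real^'n" and P :: "real^'n^'n"
  assumes P: "orth_proj P"
    and A1: "square_integrable M A1" and \<mu>: "square_integrable M \<mu>"
    and D: "\<And>i. distributed M lborel (\<lambda>\<omega>. \<Xi> \<omega> $ i) std_normal_density"
    and indep_coords: "indep_vars (\<lambda>_. borel) (\<lambda>i \<omega>. \<Xi> \<omega> $ i) UNIV"
    and indep: "indep_set
           {\<Xi> -` S \<inter> space M | S. S \<in> sets (borel :: (real^'n) measure)}
           {(\<lambda>\<omega>. (A1 \<omega>, \<mu> \<omega>)) -` S \<inter> space M | S. S \<in> sets (borel :: ((real^'n) \<times> (real^'n)) measure)}"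
  shows "(\<integral>\<^sup>+\<omega>. ennreal ((norm (P *v (A1 \<omega> - \<mu> \<omega>) - \<sigma> *\<^sub>R (P *v \<Xi> \<omega>)))^2) \<partial>M)
           = (\<integral>\<^sup>+\<omega>. ennreal ((norm (P *v (A1 \<omega> - \<mu> \<omega>)))^2) \<partial>M) + ennreal (\<sigma>^2 * trace P)"
proof -
  note moments = std_normal_vec_moments[OF D indep_coords]
  define W where "W = (\<lambda>\<omega>. P *v (A1 \<omega> - \<mu> \<omega>))"
  define Z where "Z = (\<lambda>\<omega>. \<sigma> *\<^sub>R (P *v \<Xi> \<omega>))"
  have [measurable]: "A1 \<in> borel_measurable M" "\<mu> \<in> borel_measurable M" "\<Xi> \<in> borel_measurable M"
    using A1 \<mu> moments(1) by (simp_all add: square_integrable_def)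
  have W: "square_integrable M W"
    unfolding W_def by (intro square_integrable_matrix_vector_mult square_integrable_diff A1 \<mu>)
  have Z: "square_integrable M Z"
    unfolding Z_def by (intro square_integrable_scaleR square_integrable_matrix_vector_mult moments(1))
  have "(\<lambda>p. P *v (fst p - snd p)) \<in> borel_measurable borel"
    by (intro borel_measurable_matrix_vector_mult borel_measurable_continuous_onI continuous_intros)
  then have indep_ZW: "indep_var borel Z borel W"
    using indep_var_compose_of_indep_set_preimages[OF _ _ _ _ indep,
        where g = "\<lambda>v. \<sigma> *\<^sub>R (P *v v)" and h = "\<lambda>p. P *v (fst p - snd p)" and N = borel]
    by (simp add: Z_def W_def)
  have mean_Z: "expectation (\<lambda>\<omega>. Z \<omega> $ i) = 0" for i
    using moments(1,2)
    by (simp add: Z_def matrix_vector_mult_def square_integrable_vec_iff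
        integrable_of_square_integrable Bochner_Integration.integrable_sum)
  have "expectation (\<lambda>\<omega>. (norm (Z \<omega>))^2) = \<sigma>^2 * trace P"
    using expectation_norm_sq_matrix_std_normal[OF D indep_coords, of P] sum_power2_entries_orth_proj[OF P]
    by (simp add: Z_def power_mult_distrib)
  then have "expectation (\<lambda>\<omega>. (norm (W \<omega> - Z \<omega>))^2) = expectation (\<lambda>\<omega>. (norm (W \<omega>))^2) + \<sigma>^2 * trace P"
    using expectation_norm_sq_diff_indep[OF indep_ZW W Z mean_Z] by simp
  moreover have "0 \<le> trace P"
    unfolding sum_power2_entries_orth_proj[OF P, symmetric] by (intro sum_nonneg zero_le_power2)
  ultimately show ?thesis
    unfolding nn_integral_norm_sq_eq_integral[OF square_integrable_diff[OF W Z], unfolded W_def Z_def]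
      nn_integral_norm_sq_eq_integral[OF W, unfolded W_def]
    by (simp add: W_def Z_def ennreal_plus)
qed

lemma ennreal_inverse_square_mult_le: "ennreal (1 / x^2) * (ennreal (x^2) * c) \<le> c"
proof -
  \<comment> \<open>For \<open>x = 0\<close> the factor \<open>1 / x^2\<close> is \<open>0\<close>: in HOL, division by zero yields zero.\<close>
  have "ennreal (1 / x^2) * ennreal (x^2) \<le> 1"
    by (cases "x = 0") (simp_all add: ennreal_mult'[symmetric])
  then show ?thesis
    using mult_right_mono[of _ 1 c] by (simp add: mult.assoc[symmetric])
qed

theorem propositionB2:
  fixes M :: "'a measure"
    and P :: "real^'n^'n"
    and A1 \<mu> \<Xi> :: "'a \<Rightarrow> real^'n"
    and \<sigma> :: real
  assumes "prob_space M"
    and "orth_proj P"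
    and "A1 \<in> borel_measurable M" and "\<mu> \<in> borel_measurable M" and "\<Xi> \<in> borel_measurable M"
    and "integrable M (\<lambda>\<omega>. (norm (A1 \<omega>))^2)"
    and "integrable M (\<lambda>\<omega>. (norm (\<mu> \<omega>))^2)"
    and "\<sigma> > 0"
    and "\<And>i. distributed M lborel (\<lambda>\<omega>. \<Xi> \<omega> $ i) std_normal_density"
    and "prob_space.indep_vars M (\<lambda>_. borel) (\<lambda>i \<omega>. \<Xi> \<omega> $ i) UNIV"
    and "prob_space.indep_set M
           {\<Xi> -` S \<inter> space M | S. S \<in> sets (borel :: (real^'n) measure)}
           {(\<lambda>\<omega>. (A1 \<omega>, \<mu> \<omega>)) -` S \<inter> space M | S. S \<in> sets (borel :: ((real^'n) \<times> (real^'n)) measure)}"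
  shows "branching_cost_W M P (warm_source P \<sigma> \<mu> \<Xi>) A1
           \<le> (\<integral>\<^sup>+ \<omega>. ennreal ((norm (P *v (A1 \<omega> - \<mu> \<omega>)))^2) \<partial>M)
              + ennreal (\<sigma>^2 * trace P)"
proof -
  interpret prob_space M by fact
  define R where "R = (\<integral>\<^sup>+ \<omega>. ennreal ((norm (P *v (A1 \<omega> - \<mu> \<omega>)))^2) \<partial>M) + ennreal (\<sigma>^2 * trace P)"
  have A1: "square_integrable M A1" and \<mu>: "square_integrable M \<mu>"
    using assms(3,4,6,7) by (simp_all add: square_integrable_def)
  have \<Xi>: "square_integrable M \<Xi>" by (rule std_normal_vec_moments(1)[OF assms(9,10)])
  have A0: "square_integrable M (warm_source P \<sigma> \<mu> \<Xi>)"
    unfolding warm_source_def[abs_def]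
    by (intro square_integrable_add square_integrable_matrix_vector_mult square_integrable_scaleR \<mu> \<Xi>)
  have idem: "P ** P = P" using assms(2) by (simp add: orth_proj_def)
  have residual: "(\<integral>\<^sup>+\<omega>. ennreal ((norm (P *v A1 \<omega> - P *v warm_source P \<sigma> \<mu> \<Xi> \<omega>))^2) \<partial>M) = R"
    unfolding R_def proj_diff_warm_source[OF idem]
    by (rule warm_residual_second_moment[OF assms(2) A1 \<mu> assms(9-11)])
  define cost where "cost t =
    (\<integral>\<^sup>+\<omega>. ennreal ((norm (P *v A1 \<omega> - cond_exp_vec M (interp (warm_source P \<sigma> \<mu> \<Xi>) A1 t) (\<lambda>\<eta>. P *v A1 \<eta>) \<omega>))^2) \<partial>M)"
    for t
  have "cost t \<le> ennreal ((1 - t)^2) * R" for t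
    unfolding cost_def residual[symmetric] by (rule cond_exp_vec_proj_interp_le[OF finite_measure_axioms A0 A1])
  then have "ennreal (1 / (1 - t)^2) * cost t \<le> R" for t
    by (rule order_trans[OF mult_left_mono ennreal_inverse_square_mult_le]) simp
  then have "indicator {0..1} t * ennreal (1 / (1 - t)^2) * cost t \<le> indicator {0..1} t * R" for t :: real
    by (simp add: mult.assoc mult_left_mono)
  then have "branching_cost_W M P (warm_source P \<sigma> \<mu> \<Xi>) A1 \<le> (\<integral>\<^sup>+ t. indicator {0..1::real} t * R \<partial>lborel)"
    unfolding branching_cost_W_def by (intro nn_integral_mono) (simp add: cost_def)
  also have "\<dots> = R" by (simp add: nn_integral_cmult_indicator mult.commute)
  finally show ?thesis unfolding R_def .
qed

end
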